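(* Let $\mathcal{Y}$ be a $\mathbb{Z}[X_1^{\pm1},\dots,X_n^{\pm1}]$-module and $\mathcal{G}=\{(y_1,a_1),\dots,(y_K,a_K)\}\subseteq\mathcal{Y}\rtimes\mathbb{Z}^n$. The semigroup $\langle\mathcal{G}\rangle$ is a group if and only if there exists a full-image Eulerian $\mathcal{G}$-graph that represents the neutral element $(0,0)$.
   Context: $\mathcal{Y}\rtimes\mathbb{Z}^n$ is the group of pairs $(y,a)$ with $(y,a)(y',a')=(y+X^a y',a+a')$, $X^a=X_1^{a_1}\cdots X_n^{a_n}$. A $\mathcal{G}$-graph is a finite directed multigraph $\Gamma$ whose vertex set is a finite subset of $\mathbb{Z}^n$, each vertex incident to at least one edge, each edge $e$ carries a label $\ell(e)\in\{1,\dots,K\}$, and an edge with label $i$ from $s(e)$ to $d(e)$ satisfies $d(e)=s(e)+a_i$. $\Gamma$ represents the element $\left(\sum_{e\in E(\Gamma)}X^{s(e)}\cdot y_{\ell(e)},\ \sum_{e\in E(\Gamma)}a_{\ell(e)}\right)$. $\Gamma$ is full-image if every label $1,\dots,K$ occurs on some edge, and Eulerian if it has an Euler circuit (equivalently, it is connected and every vertex has equal in- and out-degree). *)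

theory Defs
  imports "HOL-Analysis.Finite_Cartesian_Product" "HOL-Library.Multiset" "HOL-Algebra.Group"
begin

text \<open>A Z[X_1^{+-1},...,X_n^{+-1}]-module structure on an abelian group 'y is given by the
  action of the monomials: act a y = X^a * y for a in Z^n (here int ^ 'n).  The axioms say
  that this is an action of the group Z^n by additive maps, which is exactly a module over
  the group ring Z[Z^n] = Z[X_1^{+-1},...,X_n^{+-1}].\<close>
definition laurent_module :: "(int ^ 'n \<Rightarrow> 'y::ab_group_add \<Rightarrow> 'y) \<Rightarrow> bool" where
  "laurent_module act \<longleftrightarrow>
     (\<forall>y. act 0 y = y) \<and>
     (\<forall>a b y. act (a + b) y = act a (act b y)) \<and>
     (\<forall>a u v. act a (u + v) = act a u + act a v)"

definition sdp_mult :: "(int ^ 'n \<Rightarrow> 'y::ab_group_add \<Rightarrow> 'y) \<Rightarrow>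
    ('y \<times> (int ^ 'n)) \<Rightarrow> ('y \<times> (int ^ 'n)) \<Rightarrow> ('y \<times> (int ^ 'n))" where
  "sdp_mult act g h = (fst g + act (snd g) (fst h), snd g + snd h)"

inductive_set gen_semigroup :: "(int ^ 'n \<Rightarrow> 'y::ab_group_add \<Rightarrow> 'y) \<Rightarrow>
    ('y \<times> (int ^ 'n)) set \<Rightarrow> ('y \<times> (int ^ 'n)) set"
  for act G where
    gen: "g \<in> G \<Longrightarrow> g \<in> gen_semigroup act G"
  | mult: "g \<in> gen_semigroup act G \<Longrightarrow> h \<in> gen_semigroup act G \<Longrightarrow>
             sdp_mult act g h \<in> gen_semigroup act G"

text \<open>A G-graph (G = {(y_1,a_1),...,(y_K,a_K)}) is a finite directed multigraph whose edges
  are given as a list of pairs (s(e), l(e)) of source vertex in Z^n and label; the target of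
  an edge is d(e) = s(e) + a_{l(e)}.  The vertex set is the set of endpoints of edges (each
  vertex is incident to at least one edge).\<close>
definition is_G_graph :: "nat \<Rightarrow> ((int ^ 'n) \<times> nat) list \<Rightarrow> bool" where
  "is_G_graph K E \<longleftrightarrow> (\<forall>e \<in> set E. snd e \<in> {1..K})"

definition edge_dest :: "(nat \<Rightarrow> int ^ 'n) \<Rightarrow> ((int ^ 'n) \<times> nat) \<Rightarrow> int ^ 'n" where
  "edge_dest a e = fst e + a (snd e)"

definition graph_elem :: "(int ^ 'n \<Rightarrow> 'y::ab_group_add \<Rightarrow> 'y) \<Rightarrow> (nat \<Rightarrow> 'y) \<Rightarrow>
    (nat \<Rightarrow> int ^ 'n) \<Rightarrow> ((int ^ 'n) \<times> nat) list \<Rightarrow> 'y \<times> (int ^ 'n)" where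
  "graph_elem act y a E =
     ((\<Sum>e\<leftarrow>E. act (fst e) (y (snd e))), (\<Sum>e\<leftarrow>E. a (snd e)))"

definition full_image :: "nat \<Rightarrow> ((int ^ 'n) \<times> nat) list \<Rightarrow> bool" where
  "full_image K E \<longleftrightarrow> (\<forall>i \<in> {1..K}. \<exists>e \<in> set E. snd e = i)"

definition eulerian :: "(nat \<Rightarrow> int ^ 'n) \<Rightarrow> ((int ^ 'n) \<times> nat) list \<Rightarrow> bool" where
  "eulerian a E \<longleftrightarrow> E \<noteq> [] \<and>
     (\<exists>c. mset c = mset E \<and>
          (\<forall>j < length c. edge_dest a (c ! j) = fst (c ! ((j + 1) mod length c))))"

end

theory Submission
  imports Defs
begin

text \<open>Both conditions are equivalent to the existence of a word in the generators that uses every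
  generator and evaluates to the neutral element.  The walk in \<open>\<int>\<^sup>n\<close> traced by a word
  represents the word's value translated by the starting vertex, and it closes up into an Euler
  circuit exactly when the translation parts sum to zero; conversely, reading the labels along an
  Euler circuit gives a word.  If the semigroup is a group, concatenating each generator with a word
  for its inverse gives the required word; conversely, since a right inverse in the semidirect
  product is also a left inverse, every cyclic rotation of such a word evaluates to the neutral
  element, which exhibits an inverse of each generator inside the semigroup.\<close>

lemma laurent_module_act_0_left: "laurent_module act \<Longrightarrow> act 0 x = x"
  unfolding laurent_module_def by blast

lemma laurent_module_act_add_left: "laurent_module act \<Longrightarrow> act (p + q) x = act p (act q x)"
  unfolding laurent_module_def by blast

lemma laurent_module_act_add_right: "laurent_module act \<Longrightarrow> act p (u + v) = act p u + act p v"
  unfolding laurent_module_def by blast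

lemma laurent_module_act_0_right: "laurent_module act \<Longrightarrow> act p 0 = 0"
  by (metis laurent_module_act_add_right add_0 add_left_imp_eq add_0_right)

lemma laurent_module_act_eq_0_iff: "laurent_module act \<Longrightarrow> act p x = 0 \<longleftrightarrow> x = 0"
  by (metis laurent_module_act_0_right laurent_module_act_add_left laurent_module_act_0_left
      add.left_inverse)

lemmas laurent_module_simps = laurent_module_act_0_left laurent_module_act_add_left
  laurent_module_act_add_right laurent_module_act_0_right

subsection \<open>The semidirect product\<close>

lemma sdp_mult_assoc: "laurent_module act \<Longrightarrow>
  sdp_mult act (sdp_mult act x y) z = sdp_mult act x (sdp_mult act y z)"
  unfolding sdp_mult_def by (simp add: laurent_module_simps add.assoc)

lemma sdp_mult_0_left: "laurent_module act \<Longrightarrow> sdp_mult act (0, 0) x = x"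
  unfolding sdp_mult_def by (simp add: laurent_module_simps)

lemma sdp_mult_0_right: "laurent_module act \<Longrightarrow> sdp_mult act x (0, 0) = x"
  unfolding sdp_mult_def by (simp add: laurent_module_simps)

lemma sdp_mult_idem_eq_0:
  assumes "laurent_module act" and "sdp_mult act e e = e"
  shows "e = (0, 0)"
  using assms unfolding sdp_mult_def prod_eq_iff by (auto simp: laurent_module_act_0_left)

lemma sdp_mult_eq_0_commute:
  assumes m: "laurent_module act" and xz: "sdp_mult act x z = (0, 0)"
  shows "sdp_mult act z x = (0, 0)"
proof -
  have s: "snd z + snd x = 0" and f: "fst x + act (snd x) (fst z) = 0"
    using xz unfolding sdp_mult_def by (auto simp: add.commute)
  have "act (snd z) (fst x + act (snd x) (fst z)) = 0"
    using f m by (simp add: laurent_module_simps)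
  then have "act (snd z) (fst x) + act (snd z + snd x) (fst z) = 0"
    using m by (simp add: laurent_module_act_add_right laurent_module_act_add_left)
  then have "fst z + act (snd z) (fst x) = 0"
    using s m by (simp add: laurent_module_act_0_left add.commute)
  then show ?thesis
    using s unfolding sdp_mult_def by (simp add: add.commute)
qed

subsection \<open>Words in the generators\<close>

fun word_eval :: "(int ^ 'n \<Rightarrow> 'y::ab_group_add \<Rightarrow> 'y) \<Rightarrow> (nat \<Rightarrow> 'y) \<Rightarrow>
    (nat \<Rightarrow> int ^ 'n) \<Rightarrow> nat list \<Rightarrow> 'y \<times> (int ^ 'n)" where
  "word_eval act y a [] = (0, 0)"
| "word_eval act y a (i # is) = sdp_mult act (y i, a i) (word_eval act y a is)"

lemma word_eval_append: "laurent_module act \<Longrightarrow>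
  word_eval act y a (us @ vs) = sdp_mult act (word_eval act y a us) (word_eval act y a vs)"
  by (induction us) (simp_all add: sdp_mult_0_left sdp_mult_assoc)

lemma word_eval_single: "laurent_module act \<Longrightarrow> word_eval act y a [i] = (y i, a i)"
  by (simp add: sdp_mult_0_right)

lemma snd_word_eval: "snd (word_eval act y a is) = (\<Sum>i\<leftarrow>is. a i)"
  by (induction "is") (simp_all add: sdp_mult_def)

lemma word_eval_concat_eq_0: "laurent_module act \<Longrightarrow>
  (\<And>w. w \<in> set ws \<Longrightarrow> word_eval act y a w = (0, 0)) \<Longrightarrow> word_eval act y a (concat ws) = (0, 0)"
  by (induction ws) (simp_all add: word_eval_append sdp_mult_0_left)

lemma word_eval_rotate_eq_0:
  "laurent_module act \<Longrightarrow> word_eval act y a (us @ vs) = (0, 0) \<Longrightarrow>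
   word_eval act y a (vs @ us) = (0, 0)"
  by (simp add: word_eval_append sdp_mult_eq_0_commute)

lemma gen_semigroup_iff_word:
  assumes m: "laurent_module act"
  shows "x \<in> gen_semigroup act {(y i, a i) | i. i \<in> I} \<longleftrightarrow>
    (\<exists>is. is \<noteq> [] \<and> set is \<subseteq> I \<and> x = word_eval act y a is)"
proof
  show "\<exists>is. is \<noteq> [] \<and> set is \<subseteq> I \<and> x = word_eval act y a is"
    if "x \<in> gen_semigroup act {(y i, a i) | i. i \<in> I}"
    using that
  proof (induction rule: gen_semigroup.induct)
    case (gen g)
    then obtain i where "i \<in> I" "g = (y i, a i)" by blast
    then show ?case
      using word_eval_single[OF m] by (intro exI[of _ "[i]"]) auto
  next
    case (mult g h)
    then obtain us vs where "us \<noteq> []" "set us \<subseteq> I" "g = word_eval act y a us"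
      "set vs \<subseteq> I" "h = word_eval act y a vs" by blast
    then show ?case
      using word_eval_append[OF m] by (intro exI[of _ "us @ vs"]) auto
  qed
next
  have "word_eval act y a is \<in> gen_semigroup act {(y i, a i) | i. i \<in> I}"
    if "is \<noteq> []" "set is \<subseteq> I" for "is"
    using that
  proof (induction "is")
    case (Cons i js)
    have "(y i, a i) \<in> gen_semigroup act {(y i, a i) | i. i \<in> I}"
      using Cons.prems by (intro gen_semigroup.gen) auto
    with Cons show ?case
      by (cases "js = []") (auto simp: sdp_mult_0_right[OF m] intro: gen_semigroup.mult)
  qed simp
  then show "\<exists>is. is \<noteq> [] \<and> set is \<subseteq> I \<and> x = word_eval act y a is \<Longrightarrow>
      x \<in> gen_semigroup act {(y i, a i) | i. i \<in> I}"
    by blast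
qed

subsection \<open>Groups and words representing the neutral element\<close>

lemma gen_semigroup_left_inverse:
  assumes m: "laurent_module act"
    and gen_inv: "\<And>g. g \<in> G \<Longrightarrow> \<exists>z \<in> gen_semigroup act G. sdp_mult act z g = (0, 0)"
    and x: "x \<in> gen_semigroup act G"
  shows "\<exists>z \<in> gen_semigroup act G. sdp_mult act z x = (0, 0)"
  using x
proof (induction rule: gen_semigroup.induct)
  case (gen g)
  then show ?case by (rule gen_inv)
next
  case (mult g h)
  then obtain g' h' where g': "g' \<in> gen_semigroup act G" "sdp_mult act g' g = (0, 0)"
    and h': "h' \<in> gen_semigroup act G" "sdp_mult act h' h = (0, 0)"
    by blast
  have "sdp_mult act (sdp_mult act h' g') (sdp_mult act g h)
      = sdp_mult act h' (sdp_mult act (sdp_mult act g' g) h)"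
    by (simp add: sdp_mult_assoc[OF m])
  also have "\<dots> = (0, 0)"
    using g' h' by (simp add: sdp_mult_0_left[OF m])
  finally show ?case
    using g' h' by (blast intro: gen_semigroup.mult)
qed

lemma group_gen_semigroup_if_word_eq_0:
  assumes m: "laurent_module act"
    and "is \<noteq> []" and set_is: "set is = I" and is0: "word_eval act y a is = (0, 0)"
  shows "group \<lparr>carrier = gen_semigroup act {(y i, a i) | i. i \<in> I},
                monoid.mult = sdp_mult act, one = (0, 0)\<rparr>"
    (is "group ?G")
proof -
  let ?S = "gen_semigroup act {(y i, a i) | i. i \<in> I}"
  have one: "(0, 0) \<in> ?S"
    using assms by (auto simp: gen_semigroup_iff_word)
  have "\<exists>z \<in> ?S. sdp_mult act z (y i, a i) = (0, 0)" if "i \<in> I" for i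
  proof -
    obtain us vs where "is = us @ i # vs"
      using \<open>i \<in> I\<close> set_is by (metis in_set_conv_decomp)
    then have "word_eval act y a (i # vs @ us) = (0, 0)"
      using is0 word_eval_rotate_eq_0[OF m, of y a us "i # vs"] by simp
    then have inv: "sdp_mult act (word_eval act y a (vs @ us)) (y i, a i) = (0, 0)"
      by (simp add: sdp_mult_eq_0_commute[OF m])
    show ?thesis
    proof (cases "vs @ us = []")
      case True
      then show ?thesis
        using inv one by (intro bexI[of _ "(0, 0)"]) (simp_all add: sdp_mult_0_left[OF m])
    next
      case False
      have "set (vs @ us) \<subseteq> I"
        using set_is \<open>is = us @ i # vs\<close> by auto
      with False have "word_eval act y a (vs @ us) \<in> ?S"
        unfolding gen_semigroup_iff_word[OF m] by blast
      with inv show ?thesis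
        by blast
    qed
  qed
  then have "\<exists>z \<in> ?S. sdp_mult act z x = (0, 0)" if "x \<in> ?S" for x
    using gen_semigroup_left_inverse[OF m _ that] by blast
  then show "group ?G"
  proof (intro groupI)
    show "x \<otimes>\<^bsub>?G\<^esub> x' \<in> carrier ?G" if "x \<in> carrier ?G" "x' \<in> carrier ?G" for x x'
      using that by (simp add: gen_semigroup.mult)
  qed (simp_all add: one sdp_mult_assoc[OF m] sdp_mult_0_left[OF m])
qed

lemma word_eq_0_if_group_gen_semigroup:
  assumes m: "laurent_module act" and "finite I"
    and G: "group \<lparr>carrier = gen_semigroup act {(y i, a i) | i. i \<in> I},
                   monoid.mult = sdp_mult act, one = e\<rparr>" (is "group ?G")
  shows "\<exists>is. is \<noteq> [] \<and> set is = I \<and> word_eval act y a is = (0, 0)"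
proof -
  interpret G: group ?G by (rule G)
  have "sdp_mult act e e = e"
    using G.l_one[of e] G.one_closed by simp
  then have e0: "e = (0, 0)"
    by (rule sdp_mult_idem_eq_0[OF m])
  obtain ws where ws: "ws \<noteq> []" "set ws \<subseteq> I" "word_eval act y a ws = (0, 0)"
    using G.one_closed e0 by (auto simp: gen_semigroup_iff_word[OF m])
  have "\<exists>w. set w \<subseteq> I \<and> word_eval act y a (i # w) = (0, 0)" if "i \<in> I" for i
  proof -
    have "(y i, a i) \<in> carrier ?G"
      using that by (auto intro: gen_semigroup.gen)
    then obtain z where "z \<in> carrier ?G" "sdp_mult act (y i, a i) z = (0, 0)"
      using G.r_inv_ex e0 by fastforce
    then show ?thesis
      by (auto simp: gen_semigroup_iff_word[OF m])
  qed
  then obtain W where W: "\<And>i. i \<in> I \<Longrightarrow> set (W i) \<subseteq> I \<and> word_eval act y a (i # W i) = (0, 0)"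
    by metis
  \<comment> \<open>The prefix \<open>ws\<close> keeps the word nonempty without assuming \<open>I \<noteq> {}\<close>.\<close>
  define "is" where "is = ws @ concat (map (\<lambda>i. i # W i) (sorted_list_of_set I))"
  have "word_eval act y a (concat (map (\<lambda>i. i # W i) (sorted_list_of_set I))) = (0, 0)"
    using W \<open>finite I\<close> by (intro word_eval_concat_eq_0[OF m]) auto
  then have "word_eval act y a is = (0, 0)"
    using ws by (simp add: is_def word_eval_append[OF m] sdp_mult_0_left[OF m] del: word_eval.simps)
  moreover have "set is = I"
    using ws W \<open>finite I\<close> unfolding is_def by fastforce
  ultimately show ?thesis
    using ws unfolding is_def by blast
qed

lemma group_gen_semigroup_iff_word_eq_0:
  assumes "laurent_module act" and "finite I"
  shows "(\<exists>e. group \<lparr>carrier = gen_semigroup act {(y i, a i) | i. i \<in> I},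
                     monoid.mult = sdp_mult act, one = e\<rparr>)
    \<longleftrightarrow> (\<exists>is. is \<noteq> [] \<and> set is = I \<and> word_eval act y a is = (0, 0))"
  using group_gen_semigroup_if_word_eq_0[OF assms(1)] word_eq_0_if_group_gen_semigroup[OF assms]
  by blast

subsection \<open>Walks and Euler circuits\<close>

fun walk :: "(nat \<Rightarrow> int ^ 'n) \<Rightarrow> int ^ 'n \<Rightarrow> nat list \<Rightarrow> ((int ^ 'n) \<times> nat) list" where
  "walk a p [] = []"
| "walk a p (i # is) = (p, i) # walk a (p + a i) is"

lemma walk_conv_nth: "walk a p is =
   map (\<lambda>j. (p + (\<Sum>i\<leftarrow>take j is. a i), is ! j)) [0..<length is]"
  by (induction "is" arbitrary: p) (simp_all add: map_upt_Suc add.assoc del: upt_Suc)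

lemma map_snd_walk: "map snd (walk a p is) = is"
  by (induction "is" arbitrary: p) auto

lemma graph_elem_walk:
  assumes m: "laurent_module act"
  shows "graph_elem act y a (walk a p is) =
    (act p (fst (word_eval act y a is)), snd (word_eval act y a is))"
proof (induction "is" arbitrary: p)
  case Nil
  then show ?case by (simp add: graph_elem_def laurent_module_simps[OF m])
next
  case (Cons i js)
  from Cons[of "p + a i"] show ?case
    by (simp add: graph_elem_def sdp_mult_def laurent_module_simps[OF m])
qed

lemma sum_list_map_mset_cong:
  fixes f :: "'a \<Rightarrow> 'b::comm_monoid_add"
  shows "mset xs = mset ys \<Longrightarrow> sum_list (map f xs) = sum_list (map f ys)"
  by (metis mset_map sum_mset_sum_list)

lemma graph_elem_mset_cong: "mset c = mset E \<Longrightarrow> graph_elem act y a c = graph_elem act y a E"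
  unfolding graph_elem_def by (simp add: sum_list_map_mset_cong[of c E])

lemma circuit_eq_walk:
  assumes "c \<noteq> []"
    and circ: "\<forall>j < length c. edge_dest a (c ! j) = fst (c ! ((j + 1) mod length c))"
  shows "c = walk a (fst (c ! 0)) (map snd c)"
proof -
  have start: "fst (c ! j) = fst (c ! 0) + (\<Sum>i\<leftarrow>take j (map snd c). a i)"
    if "j < length c" for j
    using that
  proof (induction j)
    case (Suc j)
    have "fst (c ! Suc j) = edge_dest a (c ! j)"
      using circ Suc.prems by simp
    also have "\<dots> = fst (c ! 0) + (\<Sum>i\<leftarrow>take (Suc j) (map snd c). a i)"
      using Suc by (simp add: edge_dest_def take_Suc_conv_app_nth add.assoc)
    finally show ?case .
  qed simp
  show ?thesis
    unfolding walk_conv_nth by (rule nth_equalityI) (auto simp: start prod_eq_iff)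
qed

lemma eulerian_walk:
  assumes "is \<noteq> []" and "(\<Sum>i\<leftarrow>is. a i) = 0"
  shows "eulerian a (walk a p is)"
proof -
  let ?E = "walk a p is"
  have len: "length ?E = length is"
    by (metis map_snd_walk length_map)
  have "edge_dest a (?E ! j) = fst (?E ! ((j + 1) mod length ?E))" if "j < length ?E" for j
  proof -
    have "edge_dest a (?E ! j) = p + (\<Sum>i\<leftarrow>take (Suc j) is. a i)"
      using that len by (simp add: walk_conv_nth edge_dest_def take_Suc_conv_app_nth add.assoc)
    show ?thesis
    proof (cases "Suc j < length is")
      case True
      with \<open>edge_dest a (?E ! j) = _\<close> show ?thesis
        by (simp add: walk_conv_nth len)
    next
      case False
      then have "Suc j = length is"
        using that len by simp
      with \<open>edge_dest a (?E ! j) = _\<close> assms show ?thesis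
        by (simp add: walk_conv_nth len)
    qed
  qed
  moreover have "?E \<noteq> []"
    using len assms(1) by auto
  ultimately show ?thesis
    unfolding eulerian_def by blast
qed

lemma eulerian_graph_eq_0_iff_word_eq_0:
  assumes m: "laurent_module act"
  shows "(\<exists>E. snd ` set E = L \<and> eulerian a E \<and> graph_elem act y a E = (0, 0))
    \<longleftrightarrow> (\<exists>is. is \<noteq> [] \<and> set is = L \<and> word_eval act y a is = (0, 0))"
proof
  assume "\<exists>E. snd ` set E = L \<and> eulerian a E \<and> graph_elem act y a E = (0, 0)"
  then obtain E c where L: "snd ` set E = L" and E0: "graph_elem act y a E = (0, 0)"
    and "E \<noteq> []" and mc: "mset c = mset E"
    and circ: "\<forall>j < length c. edge_dest a (c ! j) = fst (c ! ((j + 1) mod length c))"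
    unfolding eulerian_def by blast
  have "set c = set E"
    using mc by (metis set_mset_mset)
  then have "c \<noteq> []" and "set (map snd c) = L"
    using \<open>E \<noteq> []\<close> L by auto
  have "graph_elem act y a (walk a (fst (c ! 0)) (map snd c)) = graph_elem act y a c"
    using circuit_eq_walk[OF \<open>c \<noteq> []\<close> circ] by simp
  also have "\<dots> = (0, 0)"
    using graph_elem_mset_cong[OF mc, of act y a] E0 by simp
  finally have "graph_elem act y a (walk a (fst (c ! 0)) (map snd c)) = (0, 0)" .
  then have "word_eval act y a (map snd c) = (0, 0)"
    by (simp add: graph_elem_walk[OF m] laurent_module_act_eq_0_iff[OF m] prod_eq_iff)
  with \<open>c \<noteq> []\<close> \<open>set (map snd c) = L\<close>
  show "\<exists>is. is \<noteq> [] \<and> set is = L \<and> word_eval act y a is = (0, 0)"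
    by blast
next
  assume "\<exists>is. is \<noteq> [] \<and> set is = L \<and> word_eval act y a is = (0, 0)"
  then obtain "is" where "is \<noteq> []" "set is = L" and is0: "word_eval act y a is = (0, 0)"
    by blast
  moreover have "(\<Sum>i\<leftarrow>is. a i) = 0"
    using is0 snd_word_eval[of act y a "is"] by simp
  moreover have "snd ` set (walk a 0 is) = set is"
    by (metis map_snd_walk list.set_map)
  ultimately show "\<exists>E. snd ` set E = L \<and> eulerian a E \<and> graph_elem act y a E = (0, 0)"
    using eulerian_walk graph_elem_walk[OF m, of y a 0 "is"]
    by (intro exI[of _ "walk a 0 is"]) (simp add: laurent_module_act_0_right[OF m])
qed

lemma G_graph_full_image_iff: "is_G_graph K E \<and> full_image K E \<longleftrightarrow> snd ` set E = {1..K}"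
proof -
  have "is_G_graph K E \<longleftrightarrow> snd ` set E \<subseteq> {1..K}"
    unfolding is_G_graph_def by auto
  moreover have "full_image K E \<longleftrightarrow> {1..K} \<subseteq> snd ` set E"
    unfolding full_image_def by (auto simp: image_iff)
  ultimately show ?thesis
    by (simp add: set_eq_subset)
qed

theorem mainTheorem3:
  fixes act :: "int ^ 'n \<Rightarrow> 'y::ab_group_add \<Rightarrow> 'y"
    and K :: nat and y :: "nat \<Rightarrow> 'y" and a :: "nat \<Rightarrow> int ^ 'n"
  assumes "laurent_module act"
    and "K \<ge> 1"
  shows "(\<exists>e. group \<lparr>carrier = gen_semigroup act {(y i, a i) | i. i \<in> {1..K}},
                       monoid.mult = sdp_mult act, one = e\<rparr>)
         \<longleftrightarrow> (\<exists>E. is_G_graph K E \<and> full_image K E \<and> eulerian a E \<and>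
                  graph_elem act y a E = (0, 0))"
proof -
  have "(\<exists>e. group \<lparr>carrier = gen_semigroup act {(y i, a i) | i. i \<in> {1..K}},
                     monoid.mult = sdp_mult act, one = e\<rparr>)
    \<longleftrightarrow> (\<exists>is. is \<noteq> [] \<and> set is = {1..K} \<and> word_eval act y a is = (0, 0))"
    by (rule group_gen_semigroup_iff_word_eq_0[OF assms(1) finite_atLeastAtMost])
  also have "\<dots> \<longleftrightarrow> (\<exists>E. snd ` set E = {1..K} \<and> eulerian a E \<and> graph_elem act y a E = (0, 0))"
    by (rule eulerian_graph_eq_0_iff_word_eq_0[OF assms(1), symmetric])
  also have "\<dots> \<longleftrightarrow> (\<exists>E. is_G_graph K E \<and> full_image K E \<and> eulerian a E \<and>
                  graph_elem act y a E = (0, 0))"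
    by (simp only: G_graph_full_image_iff conj_assoc[symmetric])
  finally show ?thesis .
qed

end
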